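(* Let $X$ be a finite simplicial complex and let $Y$ be a subcomplex of $X$. Then there is a homotopy equivalence $\Sigma(X\setminus Y)\simeq(\Sigma X)\setminus Y$.
   Context: Here $X$ and $Y$ are identified with their geometric realizations, $X\setminus Y$ is the complement of $|Y|$ in $|X|$, $\Sigma$ denotes the (unreduced) suspension, $\Sigma X$ is regarded as a simplicial complex (the join of $X$ with two points) containing $X$, and hence $Y$, as a subcomplex; $(\Sigma X)\setminus Y$ is the complement of $|Y|$ in $|\Sigma X|$. *)

theory Defs
  imports "HOL-Analysis.Analysis"
begin

definition simplicial_complex :: "'a set set \<Rightarrow> bool" where
  "simplicial_complex K \<longleftrightarrow>
     (\<forall>\<sigma>\<in>K. finite \<sigma> \<and> \<sigma> \<noteq> {} \<and> (\<forall>\<tau>. \<tau> \<subseteq> \<sigma> \<and> \<tau> \<noteq> {} \<longrightarrow> \<tau> \<in> K))"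

definition finite_simplicial_complex :: "'a set set \<Rightarrow> bool" where
  "finite_simplicial_complex K \<longleftrightarrow> simplicial_complex K \<and> finite K"

definition subcomplex :: "'a set set \<Rightarrow> 'a set set \<Rightarrow> bool" where
  "subcomplex L K \<longleftrightarrow> simplicial_complex L \<and> L \<subseteq> K"

text \<open>Geometric realization in barycentric coordinates, as a subset of the product
  space 'a \<Rightarrow> real (a point is a function of finite support lying in a simplex).\<close>
definition geom :: "'a set set \<Rightarrow> ('a \<Rightarrow> real) set" where
  "geom K = {f. (\<forall>v. 0 \<le> f v) \<and> {v. f v \<noteq> 0} \<in> K \<and> sum f {v. f v \<noteq> 0} = 1}"

definition cx_image :: "('a \<Rightarrow> 'b) \<Rightarrow> 'a set set \<Rightarrow> 'b set set" where
  "cx_image g K = (\<lambda>\<sigma>. g ` \<sigma>) ` K"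

text \<open>Simplicial suspension: join of K with the two points Inr True,
  Inr False.\<close>
definition susp_cx :: "'a set set \<Rightarrow> ('a + bool) set set" where
  "susp_cx K = cx_image Inl K
     \<union> {insert (Inr b) (Inl ` \<sigma>) | \<sigma> b. \<sigma> \<in> K}
     \<union> {{Inr b} | b. True}"

text \<open>Unreduced suspension of a topological space Z: the quotient of
  (Z \<times> [0,1]) \<squnion> {N,S} identifying Z \<times> {1} with N and
  Z \<times> {0} with S (so the suspension of the empty space is two points).
  N = Inl True, S = Inl False, interior points Inr (z,t) with 0 < t < 1.\<close>
definition susp_pt :: "'b \<times> real \<Rightarrow> bool + ('b \<times> real)" where
  "susp_pt p = (if snd p = 0 then Inl False else if snd p = 1 then Inl True else Inr p)"

definition suspension :: "'b topology \<Rightarrow> (bool + ('b \<times> real)) topology" where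
  "suspension Z = topology (\<lambda>U. U \<subseteq> range Inl \<union> Inr ` (topspace Z \<times> {0<..<1}) \<and>
       openin (prod_topology Z (top_of_set {0..1}))
              {p \<in> topspace Z \<times> {0..1}. susp_pt p \<in> U})"

end

theory Submission
  imports Defs
begin

text \<open>
  Write Z for \<open>|X| - |Y|\<close> and W for \<open>|\<Sigma>X| - |Y|\<close>.  A point f of W has an
  X-part and two apex coordinates \<open>a = f (Inr True)\<close> (north) and \<open>c = f (Inr False)\<close>
  (south), at most one of them nonzero.
  The map \<open>\<Sigma>Z \<rightarrow> W\<close> sends the point at height s over g to the point at parameter s on
  the broken segment from the south apex through g to the north apex; it avoids \<open>|Y|\<close>
  because the support of g is not a simplex of Y.  Conversely f is sent to its normalised
  X-part at height \<open>1/2 + (a - c) / (2 max P (a + c))\<close>, where P, the sum over the simplices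
  of X not in Y of the products of their coordinates, is positive exactly when the X-part of f
  is supported on such a simplex.  As P vanishes near \<open>|Y|\<close>, points near \<open>|Y|\<close> with a
  positive apex coordinate are already sent to a pole, so the map is continuous although the
  normalised X-part is undefined or lies in \<open>|Y|\<close> there.  Both composites are homotopic to
  the identity: on W along straight lines, which stay in the open simplex of f because the
  composite never enlarges supports; on \<open>\<Sigma>Z\<close> by moving the height linearly.
\<close>

lemma continuous_on_coordinate [continuous_intros]: "continuous_on S (\<lambda>f. f i)"
  by (rule continuous_on_subset[OF continuous_on_product_coordinates subset_UNIV])

lemma openin_less_continuous_on:
  fixes g h :: "'b::topological_space \<Rightarrow> real"
  assumes "continuous_on S g" "continuous_on S h"
  shows "openin (top_of_set S) {x \<in> S. g x < h x}"
proof -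
  have "openin (top_of_set S) (S \<inter> (\<lambda>x. h x - g x) -` {0<..})"
    using assms by (intro continuous_openin_preimage_gen continuous_intros open_greaterThan)
  moreover have "S \<inter> (\<lambda>x. h x - g x) -` {0<..} = {x \<in> S. g x < h x}"
    by auto
  ultimately show ?thesis
    by simp
qed

lemma continuous_map_open_cover:
  assumes "\<And>U. U \<in> \<U> \<Longrightarrow> openin X U" and "topspace X \<subseteq> \<Union>\<U>"
    and "\<And>U. U \<in> \<U> \<Longrightarrow> continuous_map (subtopology X U) Y f"
  shows "continuous_map X Y f"
proof (rule pasting_lemma[where I = \<U> and T = id and f = "\<lambda>_. f"])
  fix x assume "x \<in> topspace X"
  with assms(2) show "\<exists>U. U \<in> \<U> \<and> x \<in> id U \<and> f x = f x"
    by auto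
qed (use assms(1,3) in simp_all)

lemma homotopic_with_id_straight_line:
  fixes S :: "('b \<Rightarrow> real) set"
  assumes g: "continuous_map (top_of_set S) (top_of_set S) g"
    and segment: "\<And>f l. f \<in> S \<Longrightarrow> l \<in> {0..1} \<Longrightarrow> (\<lambda>x. l * f x + (1 - l) * g f x) \<in> S"
  shows "homotopic_with (\<lambda>_. True) (top_of_set S) (top_of_set S) g id"
proof -
  define K where "K = (\<lambda>(l::real, f). \<lambda>x. l * f x + (1 - l) * g f x)"
  have "continuous_on S g"
    using g by (simp add: continuous_map_in_subtopology)
  then have "continuous_on ({0..1} \<times> S) (\<lambda>p. g (snd p))"
    by (rule continuous_on_compose2[OF _ continuous_on_snd[OF continuous_on_id]]) auto
  then have "continuous_on ({0..1} \<times> S) (\<lambda>p. g (snd p) x)" for x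
    by (rule continuous_on_product_then_coordinatewise)
  moreover have "continuous_on ({0..1} \<times> S) (\<lambda>p. snd p x)" for x
    by (rule continuous_on_product_then_coordinatewise[OF continuous_on_snd[OF continuous_on_id]])
  ultimately have "continuous_on ({0..1} \<times> S) (\<lambda>p. fst p * snd p x + (1 - fst p) * g (snd p) x)" for x
    by (intro continuous_intros)
  then have "continuous_on ({0..1} \<times> S) K"
    unfolding K_def case_prod_beta' by (rule continuous_on_coordinatewise_then_product)
  moreover have "K \<in> {0..1} \<times> S \<rightarrow> S"
    using segment by (auto simp: K_def)
  ultimately have "continuous_map (prod_topology (top_of_set {0..1}) (top_of_set S)) (top_of_set S) K"
    by (simp add: continuous_map_in_subtopology)
  moreover have "K (0, f) = g f" "K (1, f) = id f" for f
    by (simp_all add: K_def)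
  ultimately show ?thesis
    unfolding homotopic_with_def by (intro exI[of _ K]) simp
qed

section \<open>The suspension of a topological space\<close>

lemma openin_suspension:
  "openin (suspension Z) U \<longleftrightarrow>
     U \<subseteq> range Inl \<union> Inr ` (topspace Z \<times> {0<..<1}) \<and>
     openin (prod_topology Z (top_of_set {0..1})) {p \<in> topspace Z \<times> {0..1}. susp_pt p \<in> U}"
proof -
  define is_open where "is_open = (\<lambda>U. U \<subseteq> range Inl \<union> Inr ` (topspace Z \<times> {0<..<1}) \<and>
     openin (prod_topology Z (top_of_set {0..1})) {p \<in> topspace Z \<times> {0..1}. susp_pt p \<in> U})"
  have Int: "{p \<in> topspace Z \<times> {0..1}. susp_pt p \<in> S \<inter> T} =
      {p \<in> topspace Z \<times> {0..1}. susp_pt p \<in> S} \<inter> {p \<in> topspace Z \<times> {0..1}. susp_pt p \<in> T}"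
    and Union: "{p \<in> topspace Z \<times> {0..1}. susp_pt p \<in> \<Union>K} =
      (\<Union>U\<in>K. {p \<in> topspace Z \<times> {0..1}. susp_pt p \<in> U})" for S T and K :: "_ set set"
    by auto
  have "istopology is_open"
    unfolding istopology_def is_open_def Int Union by (auto intro!: openin_Union)
  moreover have "suspension Z = topology is_open"
    by (simp add: suspension_def is_open_def)
  ultimately show ?thesis
    by (simp add: is_open_def)
qed

lemma topspace_suspension:
  "topspace (suspension Z) = range Inl \<union> Inr ` (topspace Z \<times> {0<..<1})"
proof (rule antisym)
  show "topspace (suspension Z) \<subseteq> range Inl \<union> Inr ` (topspace Z \<times> {0<..<1})"
    using openin_suspension[of Z "topspace (suspension Z)"] by simp
  have "{p \<in> topspace Z \<times> {0..1}. susp_pt p \<in> range Inl \<union> Inr ` (topspace Z \<times> {0<..<1})}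
      = topspace (prod_topology Z (top_of_set {0..1}))"
    by (auto simp: susp_pt_def)
  then have "openin (suspension Z) (range Inl \<union> Inr ` (topspace Z \<times> {0<..<1}))"
    by (simp add: openin_suspension del: topspace_prod_topology)
  then show "range Inl \<union> Inr ` (topspace Z \<times> {0<..<1}) \<subseteq> topspace (suspension Z)"
    by (rule openin_subset)
qed

lemma continuous_map_susp_pt:
  "continuous_map (prod_topology Z (top_of_set {0..1})) (suspension Z) susp_pt"
  by (auto simp: continuous_map_def openin_suspension topspace_suspension susp_pt_def)

lemma quotient_map_susp_pt:
  assumes "topspace Z \<noteq> {}"
  shows "quotient_map (prod_topology Z (top_of_set {0..1})) (suspension Z) susp_pt"
  unfolding quotient_map_def
proof (intro conjI allI impI)
  obtain z where z: "z \<in> topspace Z"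
    using assms by blast
  have "Inl b = susp_pt (z, if b then 1 else 0)" for b
    by (simp add: susp_pt_def)
  moreover have "Inr p = susp_pt p" if "p \<in> topspace Z \<times> {0<..<1}" for p
    using that by (auto simp: susp_pt_def)
  ultimately have "topspace (suspension Z) \<subseteq> susp_pt ` (topspace Z \<times> {0..1})"
    using z by (force simp: topspace_suspension)
  then show "susp_pt ` topspace (prod_topology Z (top_of_set {0..1})) = topspace (suspension Z)"
    using continuous_map_image_subset_topspace[OF continuous_map_susp_pt[of Z]] by auto
qed (auto simp: openin_suspension topspace_suspension)

lemma continuous_map_from_suspension:
  assumes "h \<in> topspace (suspension Z) \<rightarrow> topspace W"
    and "continuous_map (prod_topology Z (top_of_set {0..1})) W (h \<circ> susp_pt)"
  shows "continuous_map (suspension Z) W h"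
  unfolding continuous_map_def
proof (intro conjI allI impI)
  fix V assume "openin W V"
  then have "openin (prod_topology Z (top_of_set {0..1}))
      {p \<in> topspace Z \<times> {0..1}. h (susp_pt p) \<in> V}"
    using assms(2) by (auto simp: continuous_map_def)
  moreover have "susp_pt p \<in> topspace (suspension Z)" if "p \<in> topspace Z \<times> {0..1}" for p
    using continuous_map_image_subset_topspace[OF continuous_map_susp_pt] that by auto
  ultimately show "openin (suspension Z) {x \<in> topspace (suspension Z). h x \<in> V}"
    by (auto simp: openin_suspension topspace_suspension elim!: back_subst[of "openin _"])
qed (rule assms(1))

lemma continuous_map_from_prod_suspension:
  assumes "topspace Z \<noteq> {}" and "locally_compact_space U" and "Hausdorff_space U"
  shows "continuous_map (prod_topology U (suspension Z)) W H \<longleftrightarrow>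
    continuous_map (prod_topology U (prod_topology Z (top_of_set {0..1}))) W (\<lambda>(l, p). H (l, susp_pt p))"
proof -
  have "quotient_map (prod_topology U (prod_topology Z (top_of_set {0..1})))
      (prod_topology U (suspension Z)) (\<lambda>(l, p). (l, susp_pt p))"
    using assms by (intro quotient_map_prod_right quotient_map_susp_pt) auto
  from continuous_compose_quotient_map_eq[OF this, of W H] show ?thesis
    by (simp add: o_def case_prod_beta')
qed

lemma continuous_map_interpolate_height:
  assumes \<sigma>: "continuous_map (prod_topology Z (top_of_set {0..1})) euclideanreal \<sigma>"
    and \<sigma>_range: "\<And>p. p \<in> topspace Z \<times> {0..1} \<Longrightarrow> \<sigma> p \<in> {0..1}"
  shows "continuous_map (prod_topology (top_of_set {0..1}) (prod_topology Z (top_of_set {0..1})))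
      (prod_topology Z (top_of_set {0..1})) (\<lambda>(l, p). (fst p, (1 - l) * \<sigma> p + l * snd p))"
proof -
  have fst: "continuous_map (prod_topology (top_of_set {0..1}) P) euclideanreal fst"
    and snd: "continuous_map (prod_topology Q (top_of_set {0..1})) euclideanreal snd" for P Q
    using continuous_map_fst[of "top_of_set {0..1::real}" P] continuous_map_snd[of Q "top_of_set {0..1::real}"]
    by (simp_all add: continuous_map_in_subtopology)
  have "continuous_map (prod_topology (top_of_set {0..1}) (prod_topology Z (top_of_set {0..1})))
      euclideanreal (\<lambda>(l, p). (1 - l) * \<sigma> p + l * snd p)"
    unfolding case_prod_beta'
    using continuous_map_compose[OF continuous_map_snd \<sigma>] continuous_map_compose[OF continuous_map_snd snd]
    by (intro continuous_intros fst) (auto simp: o_def)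
  moreover have "(1 - l) * \<sigma> p + l * snd p \<in> {0..1}" if "l \<in> {0..1}" "p \<in> topspace Z \<times> {0..1}" for l p
    using \<sigma>_range[OF that(2)] that convex_bound_le[of "\<sigma> p" 1 "snd p" "1 - l" l]
    by (auto intro: add_nonneg_nonneg)
  ultimately show ?thesis
    using continuous_map_compose[OF continuous_map_snd continuous_map_fst]
    unfolding case_prod_beta' continuous_map_paired continuous_map_in_subtopology
    by (auto simp: o_def)
qed

lemma homotopic_suspension_reparametrisation:
  assumes \<sigma>: "continuous_map (prod_topology Z (top_of_set {0..1})) euclideanreal \<sigma>"
    and \<sigma>_range: "\<And>p. p \<in> topspace Z \<times> {0..1} \<Longrightarrow> \<sigma> p \<in> {0..1}"
    and \<sigma>_0: "\<And>z. z \<in> topspace Z \<Longrightarrow> \<sigma> (z, 0) = 0"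
    and \<sigma>_1: "\<And>z. z \<in> topspace Z \<Longrightarrow> \<sigma> (z, 1) = 1"
  shows "homotopic_with (\<lambda>_. True) (suspension Z) (suspension Z)
           (\<lambda>x. case x of Inl b \<Rightarrow> Inl b | Inr p \<Rightarrow> susp_pt (fst p, \<sigma> p)) id"
proof (cases "topspace Z = {}")
  case True
  then show ?thesis
    by (intro homotopic_with_equal continuous_map_eq[OF continuous_map_id])
      (auto simp: topspace_suspension)
next
  case False
  define H where "H = (\<lambda>(l::real, x). case x of Inl b \<Rightarrow> Inl b
      | Inr p \<Rightarrow> susp_pt (fst p, (1 - l) * \<sigma> p + l * snd p))"
  have "continuous_map (prod_topology (top_of_set {0..1}) (prod_topology Z (top_of_set {0..1})))
      (prod_topology Z (top_of_set {0..1})) (\<lambda>(l, p). (fst p, (1 - l) * \<sigma> p + l * snd p))"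
    using \<sigma> \<sigma>_range by (rule continuous_map_interpolate_height)
  then have "continuous_map (prod_topology (top_of_set {0..1}) (prod_topology Z (top_of_set {0..1})))
      (suspension Z) (\<lambda>(l, p). H (l, susp_pt p))"
    by (rule continuous_map_eq[OF continuous_map_compose[OF _ continuous_map_susp_pt]])
      (auto simp: H_def susp_pt_def \<sigma>_0 \<sigma>_1)
  moreover have "locally_compact_space (top_of_set {0..1::real})"
    by (simp add: compact_imp_locally_compact_space compact_space_subtopology)
  moreover have "Hausdorff_space (top_of_set {0..1::real})"
    by (simp add: Hausdorff_space_subtopology)
  ultimately have "continuous_map (prod_topology (top_of_set {0..1}) (suspension Z)) (suspension Z) H"
    using continuous_map_from_prod_suspension[OF False] by blast
  then have "homotopic_with (\<lambda>_. True) (suspension Z) (suspension Z) (\<lambda>x. H (0, x)) (\<lambda>x. H (1, x))"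
    unfolding homotopic_with_def by (intro exI[of _ H]) simp
  moreover have "H (0, x) = (case x of Inl b \<Rightarrow> Inl b | Inr p \<Rightarrow> susp_pt (fst p, \<sigma> p))" for x
    by (simp add: H_def split: sum.split)
  moreover have "H (1, x) = id x" if "x \<in> topspace (suspension Z)" for x
    using that by (auto simp: H_def topspace_suspension susp_pt_def)
  ultimately show ?thesis
    by (elim homotopic_with_eq) simp_all
qed

section \<open>Realisations of simplicial complexes and of their suspensions\<close>

lemma simplicial_complex_finite: "simplicial_complex K \<Longrightarrow> \<sigma> \<in> K \<Longrightarrow> finite \<sigma>"
  and simplicial_complex_nonempty: "simplicial_complex K \<Longrightarrow> \<sigma> \<in> K \<Longrightarrow> \<sigma> \<noteq> {}"
  and simplicial_complex_face: "simplicial_complex K \<Longrightarrow> \<sigma> \<in> K \<Longrightarrow> \<tau> \<subseteq> \<sigma> \<Longrightarrow> \<tau> \<noteq> {} \<Longrightarrow> \<tau> \<in> K"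
  unfolding simplicial_complex_def by blast+

definition supp :: "('b \<Rightarrow> real) \<Rightarrow> 'b set" where
  "supp f = {x. f x \<noteq> 0}"

lemma geom_iff: "f \<in> geom K \<longleftrightarrow> (\<forall>v. 0 \<le> f v) \<and> supp f \<in> K \<and> sum f (supp f) = 1"
  by (simp add: geom_def supp_def)

lemma finite_supp_geom: "f \<in> geom K \<Longrightarrow> finite (supp f)"
  by (metis geom_iff sum.infinite zero_neq_one)

lemma geom_Diff_iff: "f \<in> geom K - geom L \<longleftrightarrow> f \<in> geom K \<and> supp f \<notin> L"
  by (auto simp: geom_iff)

lemma sum_supp_scale:
  "sum (\<lambda>x. c * g x) (supp (\<lambda>x. c * g x)) = c * sum g (supp g)"
  by (cases "c = 0") (simp_all add: supp_def sum_distrib_left)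

lemma geom_convex_combination:
  assumes f: "f \<in> geom K" and h: "h \<in> geom K" and "supp h \<subseteq> supp f" and "0 < l" "l \<le> 1"
  shows "(\<lambda>x. l * f x + (1 - l) * h x) \<in> geom K"
    and "supp (\<lambda>x. l * f x + (1 - l) * h x) = supp f"
proof -
  have nonneg: "0 \<le> f x" "0 \<le> h x" for x
    using f h by (auto simp: geom_iff)
  have "l * f x + (1 - l) * h x \<noteq> 0 \<longleftrightarrow> f x \<noteq> 0" for x
  proof
    assume "f x \<noteq> 0"
    then have "0 < l * f x"
      using nonneg(1)[of x] \<open>0 < l\<close> by simp
    moreover have "0 \<le> (1 - l) * h x"
      using nonneg(2)[of x] \<open>l \<le> 1\<close> by simp
    ultimately show "l * f x + (1 - l) * h x \<noteq> 0"
      by linarith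
  qed (use assms(3) in \<open>auto simp: supp_def\<close>)
  then show supp: "supp (\<lambda>x. l * f x + (1 - l) * h x) = supp f"
    by (simp add: supp_def)
  have "sum h (supp f) = sum h (supp h)"
    using assms(3) finite_supp_geom[OF f] by (intro sum.mono_neutral_right) (auto simp: supp_def)
  then have "sum (\<lambda>x. l * f x + (1 - l) * h x) (supp f) = 1"
    using f h by (simp add: geom_iff sum.distrib flip: sum_distrib_left)
  with supp f h \<open>0 < l\<close> \<open>l \<le> 1\<close> show "(\<lambda>x. l * f x + (1 - l) * h x) \<in> geom K"
    by (auto simp: geom_iff)
qed

lemma cx_image_Inl_iff: "S \<in> cx_image Inl K \<longleftrightarrow> S \<subseteq> range Inl \<and> Inl -` S \<in> K"
proof
  assume "S \<subseteq> range Inl \<and> Inl -` S \<in> K"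
  then have "S = Inl ` (Inl -` S)" "Inl -` S \<in> K"
    by auto
  then show "S \<in> cx_image Inl K"
    unfolding cx_image_def by (rule image_eqI)
qed (auto simp: cx_image_def inj_vimage_image_eq)

lemma Inl_image_vimage:
  fixes S :: "('a + bool) set"
  shows "Inr True \<notin> S \<Longrightarrow> Inr False \<notin> S \<Longrightarrow> Inl ` (Inl -` S) = S"
    and "Inr b \<in> S \<Longrightarrow> Inr (\<not> b) \<notin> S \<Longrightarrow> insert (Inr b) (Inl ` (Inl -` S)) = S"
proof -
  show "Inl ` (Inl -` S) = S" if "Inr True \<notin> S" "Inr False \<notin> S"
  proof (rule set_eqI)
    show "x \<in> Inl ` (Inl -` S) \<longleftrightarrow> x \<in> S" for x
      using that by (cases x) (auto simp: image_iff, metis (full_types))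
  qed
  show "insert (Inr b) (Inl ` (Inl -` S)) = S" if "Inr b \<in> S" "Inr (\<not> b) \<notin> S"
  proof (rule set_eqI)
    show "x \<in> insert (Inr b) (Inl ` (Inl -` S)) \<longleftrightarrow> x \<in> S" for x
      using that by (cases x; cases b) (auto simp: image_iff, metis (full_types))
  qed
qed

lemma susp_cx_simplexD:
  assumes "simplicial_complex K" and "S \<in> susp_cx K"
  shows "S \<noteq> {} \<and> \<not> (Inr True \<in> S \<and> Inr False \<in> S) \<and> (Inl -` S \<in> K \<or> Inl -` S = {})"
proof -
  consider \<sigma> where "\<sigma> \<in> K" "S = Inl ` \<sigma>" | \<sigma> b where "\<sigma> \<in> K" "S = insert (Inr b) (Inl ` \<sigma>)"
    | b where "S = {Inr b}"
    using assms(2) unfolding susp_cx_def cx_image_def by (elim UnE imageE CollectE exE conjE) auto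
  then show ?thesis
  proof cases
    case 1
    then show ?thesis
      using simplicial_complex_nonempty[OF assms(1) 1(1)] by (auto simp: inj_vimage_image_eq)
  next
    case (2 \<sigma> b)
    moreover have "Inl -` S = \<sigma>"
      using 2(2) by auto
    ultimately show ?thesis
      by (cases b) auto
  next
    case (3 b)
    then show ?thesis
      by (cases b) auto
  qed
qed

lemma susp_cx_simplexI:
  assumes "S \<noteq> {}" and "\<not> (Inr True \<in> S \<and> Inr False \<in> S)" and "Inl -` S \<in> K \<or> Inl -` S = {}"
  shows "S \<in> susp_cx K"
proof -
  consider "Inr True \<notin> S" "Inr False \<notin> S" | b where "Inr b \<in> S" "Inr (\<not> b) \<notin> S"
    using assms(2) by (metis (full_types))
  then show ?thesis
  proof cases
    case 1
    then have S: "S = Inl ` (Inl -` S)"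
      by (rule Inl_image_vimage(1)[symmetric])
    with assms(1,3) have "Inl -` S \<in> K"
      by (metis image_empty)
    with S have "S \<in> cx_image Inl K"
      unfolding cx_image_def by (rule image_eqI)
    then show ?thesis
      by (simp add: susp_cx_def)
  next
    case (2 b)
    then have S: "S = insert (Inr b) (Inl ` (Inl -` S))"
      by (rule Inl_image_vimage(2)[symmetric])
    show ?thesis
    proof (cases "Inl -` S = {}")
      case True
      with S have "S \<in> {{Inr b} | b. True}"
        by auto
      then show ?thesis
        unfolding susp_cx_def by (rule UnI2)
    next
      case False
      with S assms(3) have "S \<in> {insert (Inr b) (Inl ` \<sigma>) | \<sigma> b. \<sigma> \<in> K}"
        by blast
      then show ?thesis
        unfolding susp_cx_def by (intro UnI1 UnI2)
    qed
  qed
qed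

lemma susp_cx_iff:
  assumes "simplicial_complex K"
  shows "S \<in> susp_cx K \<longleftrightarrow>
    S \<noteq> {} \<and> \<not> (Inr True \<in> S \<and> Inr False \<in> S) \<and> (Inl -` S \<in> K \<or> Inl -` S = {})"
  using susp_cx_simplexD[OF assms, of S] susp_cx_simplexI[of S K] by blast

lemma supp_comp_Inl: "supp (f \<circ> Inl) = Inl -` supp f"
  by (auto simp: supp_def)

lemma supp_subset_range_Inl_iff: "supp f \<subseteq> range Inl \<longleftrightarrow> f (Inr True) = 0 \<and> f (Inr False) = 0"
proof -
  have "supp f \<subseteq> range Inl \<longleftrightarrow> (\<forall>b. f (Inr b) = 0)"
    by (auto simp: supp_def subset_eq) (metis sumE rangeI)
  then show ?thesis
    by (metis (full_types))
qed

lemma sum_supp_Inl_Inr: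
  assumes "finite (supp (f \<circ> Inl))"
  shows "sum f (supp f) = sum (f \<circ> Inl) (supp (f \<circ> Inl)) + f (Inr True) + f (Inr False)"
proof -
  define W where "W = Inl ` supp (f \<circ> Inl) \<union> {Inr True, Inr False}"
  have "x \<in> W" if "x \<in> supp f" for x
    using that by (cases x) (auto simp: W_def supp_def)
  then have "supp f \<subseteq> W" ..
  then have "sum f (supp f) = sum f W"
    using assms by (intro sum.mono_neutral_left) (auto simp: W_def supp_def)
  also have "\<dots> = sum f (Inl ` supp (f \<circ> Inl)) + sum f {Inr True, Inr False}"
    unfolding W_def using assms by (intro sum.union_disjoint) auto
  also have "\<dots> = sum (f \<circ> Inl) (supp (f \<circ> Inl)) + f (Inr True) + f (Inr False)"
    by (simp add: sum.reindex)
  finally show ?thesis .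
qed

lemma geom_susp_cx_iff:
  assumes K: "simplicial_complex K"
  shows "f \<in> geom (susp_cx K) \<longleftrightarrow>
    (\<forall>x. 0 \<le> f x) \<and> (f (Inr True) = 0 \<or> f (Inr False) = 0) \<and>
    (supp (f \<circ> Inl) \<in> K \<or> supp (f \<circ> Inl) = {}) \<and>
    sum (f \<circ> Inl) (supp (f \<circ> Inl)) + f (Inr True) + f (Inr False) = 1"
proof -
  have apex: "Inr b \<in> supp f \<longleftrightarrow> f (Inr b) \<noteq> 0" for b
    by (simp add: supp_def)
  have finite: "finite (supp (f \<circ> Inl))" if "supp (f \<circ> Inl) \<in> K \<or> supp (f \<circ> Inl) = {}"
    using that simplicial_complex_finite[OF K] by auto
  show ?thesis
  proof
    assume f: "f \<in> geom (susp_cx K)"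
    then have "supp f \<in> susp_cx K"
      by (simp add: geom_iff)
    then have "supp (f \<circ> Inl) \<in> K \<or> supp (f \<circ> Inl) = {}" "f (Inr True) = 0 \<or> f (Inr False) = 0"
      unfolding susp_cx_iff[OF K] apex supp_comp_Inl[symmetric] by auto
    with f sum_supp_Inl_Inr[OF finite] show "(\<forall>x. 0 \<le> f x) \<and> (f (Inr True) = 0 \<or> f (Inr False) = 0) \<and>
        (supp (f \<circ> Inl) \<in> K \<or> supp (f \<circ> Inl) = {}) \<and>
        sum (f \<circ> Inl) (supp (f \<circ> Inl)) + f (Inr True) + f (Inr False) = 1"
      by (auto simp: geom_iff)
  next
    assume f: "(\<forall>x. 0 \<le> f x) \<and> (f (Inr True) = 0 \<or> f (Inr False) = 0) \<and>
        (supp (f \<circ> Inl) \<in> K \<or> supp (f \<circ> Inl) = {}) \<and>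
        sum (f \<circ> Inl) (supp (f \<circ> Inl)) + f (Inr True) + f (Inr False) = 1"
    then have "sum f (supp f) = 1"
      using sum_supp_Inl_Inr[OF finite] by auto
    then have "supp f \<noteq> {}"
      by auto
    with f have "supp f \<in> susp_cx K"
      unfolding susp_cx_iff[OF K] apex supp_comp_Inl[symmetric] by auto
    with f \<open>sum f (supp f) = 1\<close> show "f \<in> geom (susp_cx K)"
      by (simp add: geom_iff)
  qed
qed

section \<open>Join coordinates\<close>

definition apex :: "bool \<Rightarrow> 'a + bool \<Rightarrow> real" where
  "apex b = (\<lambda>x. if x = Inr b then 1 else 0)"

text \<open>\<open>join_pt (g, s)\<close> runs from the south apex (s = 0) through g (s = 1/2) to the north
  apex (s = 1).\<close>

definition join_pt :: "('a \<Rightarrow> real) \<times> real \<Rightarrow> 'a + bool \<Rightarrow> real" where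
  "join_pt p = (\<lambda>x. case x of
      Inl v \<Rightarrow> (1 - \<bar>2 * snd p - 1\<bar>) * fst p v
    | Inr b \<Rightarrow> if b then max 0 (2 * snd p - 1) else max 0 (1 - 2 * snd p))"

definition susp_to_join :: "bool + ('a \<Rightarrow> real) \<times> real \<Rightarrow> 'a + bool \<Rightarrow> real" where
  "susp_to_join x = (case x of Inl b \<Rightarrow> apex b | Inr p \<Rightarrow> join_pt p)"

text \<open>Meaningless when \<open>f (Inr True) + f (Inr False) = 1\<close>; at the poles \<open>susp_pt\<close>
  discards it anyway.\<close>

definition base :: "('a + bool \<Rightarrow> real) \<Rightarrow> 'a \<Rightarrow> real" where
  "base f = (\<lambda>v. f (Inl v) / (1 - f (Inr True) - f (Inr False)))"

lemma join_pt_apex: "join_pt (g, 1) = apex True" "join_pt (g, 0) = apex False"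
  by (auto simp: join_pt_def apex_def fun_eq_iff split: sum.split)

lemma susp_to_join_susp_pt: "snd p \<in> {0..1} \<Longrightarrow> susp_to_join (susp_pt p) = join_pt p"
  by (cases p) (auto simp: susp_pt_def susp_to_join_def join_pt_apex)

lemma continuous_on_join_pt: "continuous_on S join_pt"
proof (rule continuous_on_coordinatewise_then_product)
  fix x :: "'a + bool"
  have fst: "continuous_on S (\<lambda>p. fst p v)" for v :: 'a
    by (rule continuous_on_product_then_coordinatewise[OF continuous_on_fst[OF continuous_on_id]])
  show "continuous_on S (\<lambda>p. join_pt p x)"
  proof (cases x)
    case (Inl v)
    then show ?thesis
      by (simp add: join_pt_def) (intro continuous_intros fst)
  next
    case (Inr b)
    then show ?thesis
      by (cases b) (simp_all add: join_pt_def; intro continuous_intros)+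
  qed
qed

lemma continuous_on_base:
  assumes "\<And>f. f \<in> S \<Longrightarrow> f (Inr True) + f (Inr False) \<noteq> 1"
  shows "continuous_on S base"
  unfolding base_def
  by (intro continuous_on_coordinatewise_then_product continuous_intros) (use assms in force)

lemma base_join_pt:
  assumes "0 < s" "s < 1"
  shows "base (join_pt (g, s)) = g"
proof -
  have "join_pt (g, s) (Inr True) + join_pt (g, s) (Inr False) = \<bar>2 * s - 1\<bar>"
    by (simp add: join_pt_def)
  moreover have "\<bar>2 * s - 1\<bar> < 1"
    using assms by auto
  ultimately show ?thesis
    by (auto simp: base_def join_pt_def fun_eq_iff diff_diff_eq)
qed

locale simplicial_pair =
  fixes X Y :: "'a set set"
  assumes finite_simplicial_complex_X: "finite_simplicial_complex X"
    and subcomplex_Y: "subcomplex Y X"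
begin

lemma simplicial_complex_X: "simplicial_complex X"
  and finite_X: "finite X"
  and simplicial_complex_Y: "simplicial_complex Y"
  using finite_simplicial_complex_X subcomplex_Y
  by (simp_all add: finite_simplicial_complex_def subcomplex_def)

definition X_minus_Y :: "('a \<Rightarrow> real) set" where
  "X_minus_Y = geom X - geom Y"

definition SX_minus_Y :: "('a + bool \<Rightarrow> real) set" where
  "SX_minus_Y = geom (susp_cx X) - geom (cx_image Inl Y)"

lemma X_minus_Y_iff: "g \<in> X_minus_Y \<longleftrightarrow> (\<forall>v. 0 \<le> g v) \<and> supp g \<in> X - Y \<and> sum g (supp g) = 1"
  by (auto simp: X_minus_Y_def geom_iff)

lemma SX_minus_Y_iff:
  "f \<in> SX_minus_Y \<longleftrightarrow>
    (\<forall>x. 0 \<le> f x) \<and> (f (Inr True) = 0 \<or> f (Inr False) = 0) \<and>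
    (supp (f \<circ> Inl) \<in> X \<or> supp (f \<circ> Inl) = {}) \<and>
    sum (f \<circ> Inl) (supp (f \<circ> Inl)) + f (Inr True) + f (Inr False) = 1 \<and>
    (f (Inr True) = 0 \<and> f (Inr False) = 0 \<longrightarrow> supp (f \<circ> Inl) \<notin> Y)"
  unfolding SX_minus_Y_def geom_Diff_iff geom_susp_cx_iff[OF simplicial_complex_X] cx_image_Inl_iff
    supp_subset_range_Inl_iff supp_comp_Inl[symmetric]
  by blast

definition face_sum :: "('a \<Rightarrow> real) \<Rightarrow> real" where
  "face_sum u = (\<Sum>\<tau>\<in>X - Y. \<Prod>v\<in>\<tau>. u v)"

lemma face_sum_nonneg: "(\<And>v. 0 \<le> u v) \<Longrightarrow> 0 \<le> face_sum u"
  unfolding face_sum_def by (intro sum_nonneg prod_nonneg) auto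

lemma face_sum_zero: "face_sum (\<lambda>_. 0) = 0"
  unfolding face_sum_def
  using simplicial_complex_finite[OF simplicial_complex_X] simplicial_complex_nonempty[OF simplicial_complex_X]
  by (intro sum.neutral) (auto simp: card_gt_0_iff)

lemma face_sum_pos_iff:
  assumes nonneg: "\<And>v. 0 \<le> u v" and supp: "supp u \<in> X \<or> supp u = {}"
  shows "0 < face_sum u \<longleftrightarrow> supp u \<in> X - Y"
proof -
  have "0 < face_sum u \<longleftrightarrow> face_sum u \<noteq> 0"
    using face_sum_nonneg[of u, OF nonneg] by auto
  also have "\<dots> \<longleftrightarrow> (\<exists>\<tau>\<in>X - Y. prod u \<tau> \<noteq> 0)"
    unfolding face_sum_def using finite_X nonneg by (subst sum_nonneg_eq_0_iff) (auto intro: prod_nonneg)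
  also have "\<dots> \<longleftrightarrow> (\<exists>\<tau>\<in>X - Y. \<tau> \<subseteq> supp u)"
    using simplicial_complex_finite[OF simplicial_complex_X] by (auto simp: supp_def)
  also have "\<dots> \<longleftrightarrow> supp u \<in> X - Y"
    using supp simplicial_complex_nonempty[OF simplicial_complex_X]
      simplicial_complex_face[OF simplicial_complex_Y] by blast
  finally show ?thesis .
qed

lemma continuous_on_face_sum [continuous_intros]: "continuous_on S (\<lambda>f. face_sum (f \<circ> Inl))"
  unfolding face_sum_def o_def by (intro continuous_intros)

lemma SX_minus_Y_nonneg: "f \<in> SX_minus_Y \<Longrightarrow> 0 \<le> f x"
  by (simp add: SX_minus_Y_iff)

lemma height_denominator_pos:
  assumes f: "f \<in> SX_minus_Y"
  shows "0 < max (face_sum (f \<circ> Inl)) (f (Inr True) + f (Inr False))"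
proof (cases "f (Inr True) = 0 \<and> f (Inr False) = 0")
  case True
  with f have "supp (f \<circ> Inl) \<in> X - Y"
    by (auto simp: SX_minus_Y_iff)
  with f have "0 < face_sum (f \<circ> Inl)"
    by (subst face_sum_pos_iff) (auto simp: SX_minus_Y_iff)
  then show ?thesis
    by simp
next
  case False
  with SX_minus_Y_nonneg[OF f] show ?thesis
    by (metis add_nonneg_pos add_pos_nonneg less_eq_real_def max.strict_coboundedI2)
qed

definition height :: "('a + bool \<Rightarrow> real) \<Rightarrow> real" where
  "height f = 1/2 + (f (Inr True) - f (Inr False)) /
     (2 * max (face_sum (f \<circ> Inl)) (f (Inr True) + f (Inr False)))"

lemma height_bounds:
  assumes f: "f \<in> SX_minus_Y"
  shows "0 \<le> height f" "height f \<le> 1"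
proof -
  let ?M = "max (face_sum (f \<circ> Inl)) (f (Inr True) + f (Inr False))"
  have "\<bar>f (Inr True) - f (Inr False)\<bar> \<le> ?M"
    using SX_minus_Y_nonneg[OF f, of "Inr True"] SX_minus_Y_nonneg[OF f, of "Inr False"]
    by (simp add: abs_le_iff le_max_iff_disj)
  then have "\<bar>(f (Inr True) - f (Inr False)) / (2 * ?M)\<bar> \<le> 1/2"
    using height_denominator_pos[OF f] by (simp add: abs_divide)
  then show "0 \<le> height f" "height f \<le> 1"
    unfolding height_def by linarith+
qed

lemma height_gt_half_iff: "1/2 < height f \<longleftrightarrow> f (Inr False) < f (Inr True)"
  and height_lt_half_iff: "height f < 1/2 \<longleftrightarrow> f (Inr True) < f (Inr False)"
  if f: "f \<in> SX_minus_Y"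
proof -
  define M where "M = max (face_sum (f \<circ> Inl)) (f (Inr True) + f (Inr False))"
  have "0 < M"
    using height_denominator_pos[OF f] by (simp add: M_def)
  then show "1/2 < height f \<longleftrightarrow> f (Inr False) < f (Inr True)"
    and "height f < 1/2 \<longleftrightarrow> f (Inr True) < f (Inr False)"
    by (simp_all add: height_def flip: M_def add: zero_less_divide_iff divide_less_0_iff)
qed

lemma height_eq_1:
  assumes f: "f \<in> SX_minus_Y" and "face_sum (f \<circ> Inl) < f (Inr True)"
  shows "height f = 1"
proof -
  have "0 < f (Inr True)"
    using assms face_sum_nonneg[of "f \<circ> Inl"] SX_minus_Y_nonneg[OF f] by fastforce
  with f assms(2) show ?thesis
    by (auto simp: height_def SX_minus_Y_iff)
qed

lemma height_eq_0:
  assumes f: "f \<in> SX_minus_Y" and "face_sum (f \<circ> Inl) < f (Inr False)"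
  shows "height f = 0"
proof -
  have "0 < f (Inr False)"
    using assms face_sum_nonneg[of "f \<circ> Inl"] SX_minus_Y_nonneg[OF f] by fastforce
  with f assms(2) show ?thesis
    by (auto simp: height_def SX_minus_Y_iff)
qed

lemma continuous_on_height: "continuous_on SX_minus_Y height"
  unfolding height_def by (intro continuous_intros) (use height_denominator_pos in force)

definition join_to_susp :: "('a + bool \<Rightarrow> real) \<Rightarrow> bool + ('a \<Rightarrow> real) \<times> real" where
  "join_to_susp f = susp_pt (base f, height f)"

lemma join_to_susp_north: "f \<in> SX_minus_Y \<Longrightarrow> face_sum (f \<circ> Inl) < f (Inr True) \<Longrightarrow> join_to_susp f = Inl True"
  and join_to_susp_south: "f \<in> SX_minus_Y \<Longrightarrow> face_sum (f \<circ> Inl) < f (Inr False) \<Longrightarrow> join_to_susp f = Inl False"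
  by (simp_all add: join_to_susp_def susp_pt_def height_eq_1 height_eq_0)

lemma base_in_X_minus_Y:
  assumes f: "f \<in> SX_minus_Y" and "0 < face_sum (f \<circ> Inl)" and "f (Inr True) + f (Inr False) < 1"
  shows "base f \<in> X_minus_Y"
proof -
  define d where "d = 1 - f (Inr True) - f (Inr False)"
  have "0 < d"
    using assms(3) by (simp add: d_def)
  have base: "base f = (\<lambda>v. (1 / d) * (f \<circ> Inl) v)"
    by (simp add: base_def d_def fun_eq_iff)
  have "supp (f \<circ> Inl) \<in> X - Y"
    using f assms(2) by (subst (asm) face_sum_pos_iff) (auto simp: SX_minus_Y_iff)
  moreover have "supp (base f) = supp (f \<circ> Inl)"
    using \<open>0 < d\<close> by (auto simp: base supp_def)
  moreover have "sum (f \<circ> Inl) (supp (f \<circ> Inl)) = d"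
    using f by (simp add: SX_minus_Y_iff d_def)
  then have "sum (base f) (supp (base f)) = 1"
    using \<open>0 < d\<close> unfolding base sum_supp_scale by (simp add: o_def)
  ultimately show ?thesis
    using f \<open>0 < d\<close> by (auto simp: X_minus_Y_iff SX_minus_Y_iff base)
qed

lemma SX_minus_Y_cover:
  assumes f: "f \<in> SX_minus_Y"
  shows "face_sum (f \<circ> Inl) < f (Inr True) \<or> face_sum (f \<circ> Inl) < f (Inr False) \<or>
    (0 < face_sum (f \<circ> Inl) \<and> f (Inr True) + f (Inr False) < 1)"
proof (rule ccontr)
  assume not_covered: "\<not> ?thesis"
  have "0 < face_sum (f \<circ> Inl)"
    using not_covered height_denominator_pos[OF f] by (auto simp: less_max_iff_disj)
  with not_covered have "sum (f \<circ> Inl) (supp (f \<circ> Inl)) \<le> 0"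
    using f by (auto simp: SX_minus_Y_iff)
  moreover have "finite (supp (f \<circ> Inl))"
    using f simplicial_complex_finite[OF simplicial_complex_X] by (auto simp: SX_minus_Y_iff)
  ultimately have "supp (f \<circ> Inl) = {}"
    using SX_minus_Y_nonneg[OF f] sum_pos[of "supp (f \<circ> Inl)" "f \<circ> Inl"]
    by (force simp: supp_def less_le)
  then have "f \<circ> Inl = (\<lambda>_. 0)"
    by (auto simp: supp_def)
  with \<open>0 < face_sum (f \<circ> Inl)\<close> show False
    by (metis face_sum_zero less_irrefl)
qed

lemma continuous_map_join_to_susp_off_poles:
  "continuous_map
     (top_of_set {f \<in> SX_minus_Y. 0 < face_sum (f \<circ> Inl) \<and> f (Inr True) + f (Inr False) < 1})
     (suspension (top_of_set X_minus_Y)) join_to_susp"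
  (is "continuous_map (top_of_set ?M) _ _")
proof -
  have "continuous_on ?M base"
    by (rule continuous_on_base) auto
  moreover have "continuous_on ?M height"
    by (rule continuous_on_subset[OF continuous_on_height]) auto
  ultimately have "continuous_map (top_of_set ?M) (prod_topology (top_of_set X_minus_Y) (top_of_set {0..1}))
      (\<lambda>f. (base f, height f))"
    using base_in_X_minus_Y height_bounds
    by (auto simp: continuous_map_in_subtopology intro!: continuous_on_Pair)
  from continuous_map_compose[OF this continuous_map_susp_pt] show ?thesis
    by (simp add: o_def join_to_susp_def[abs_def])
qed

lemma continuous_map_join_to_susp:
  "continuous_map (top_of_set SX_minus_Y) (suspension (top_of_set X_minus_Y)) join_to_susp"
proof -
  define N where "N = {f \<in> SX_minus_Y. face_sum (f \<circ> Inl) < f (Inr True)}"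
  define S where "S = {f \<in> SX_minus_Y. face_sum (f \<circ> Inl) < f (Inr False)}"
  define M where "M = {f \<in> SX_minus_Y. 0 < face_sum (f \<circ> Inl) \<and> f (Inr True) + f (Inr False) < 1}"
  have "continuous_map (top_of_set N) (suspension (top_of_set X_minus_Y)) join_to_susp"
    by (rule continuous_map_eq[of _ _ "\<lambda>_. Inl True"])
      (auto simp: N_def topspace_suspension join_to_susp_north)
  moreover have "continuous_map (top_of_set S) (suspension (top_of_set X_minus_Y)) join_to_susp"
    by (rule continuous_map_eq[of _ _ "\<lambda>_. Inl False"])
      (auto simp: S_def topspace_suspension join_to_susp_south)
  ultimately have continuous: "continuous_map (top_of_set U) (suspension (top_of_set X_minus_Y)) join_to_susp"
    if "U \<in> {N, S, M}" for U
    using that continuous_map_join_to_susp_off_poles by (auto simp: M_def)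
  have M_eq: "M = {f \<in> SX_minus_Y. 0 < face_sum (f \<circ> Inl)} \<inter>
      {f \<in> SX_minus_Y. f (Inr True) + f (Inr False) < 1}"
    by (auto simp: M_def)
  have "openin (top_of_set SX_minus_Y) N" "openin (top_of_set SX_minus_Y) S"
    "openin (top_of_set SX_minus_Y) M"
    unfolding N_def S_def M_eq by (intro openin_Int openin_less_continuous_on continuous_intros)+
  then have "openin (top_of_set SX_minus_Y) U" if "U \<in> {N, S, M}" for U
    using that by blast
  moreover have "topspace (top_of_set SX_minus_Y) \<subseteq> \<Union>{N, S, M}"
    using SX_minus_Y_cover by (auto simp: N_def S_def M_def)
  moreover have "continuous_map (subtopology (top_of_set SX_minus_Y) U)
      (suspension (top_of_set X_minus_Y)) join_to_susp" if "U \<in> {N, S, M}" for U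
  proof -
    have "U \<subseteq> SX_minus_Y"
      using that by (auto simp: N_def S_def M_def)
    with continuous[OF that] show ?thesis
      by (simp add: subtopology_subtopology Int_absorb1)
  qed
  ultimately show ?thesis
    by (rule continuous_map_open_cover)
qed

lemma apex_in_SX_minus_Y: "apex b \<in> SX_minus_Y"
proof -
  have "apex b \<circ> Inl = (\<lambda>_. 0)"
    by (simp add: apex_def fun_eq_iff)
  then show ?thesis
    by (cases b) (auto simp: SX_minus_Y_iff apex_def supp_def)
qed

lemma join_pt_in_SX_minus_Y:
  assumes g: "g \<in> X_minus_Y" and s: "s \<in> {0..1}"
  shows "join_pt (g, s) \<in> SX_minus_Y"
proof -
  define t where "t = \<bar>2 * s - 1\<bar>"
  have t: "0 \<le> t" "t \<le> 1"
    using s by (auto simp: t_def)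
  have Inl: "join_pt (g, s) \<circ> Inl = (\<lambda>v. (1 - t) * g v)"
    by (simp add: join_pt_def t_def fun_eq_iff)
  have apexes: "join_pt (g, s) (Inr True) + join_pt (g, s) (Inr False) = t"
    by (auto simp: join_pt_def t_def)
  have supp: "supp (join_pt (g, s) \<circ> Inl) = (if t = 1 then {} else supp g)"
    using t by (auto simp: Inl supp_def)
  have "sum (join_pt (g, s) \<circ> Inl) (supp (join_pt (g, s) \<circ> Inl)) = 1 - t"
    using g unfolding Inl sum_supp_scale by (simp add: X_minus_Y_iff)
  with g t supp apexes show ?thesis
    unfolding SX_minus_Y_iff X_minus_Y_iff
    by (auto simp: Inl join_pt_def split: sum.split)
qed

lemma continuous_map_susp_to_join:
  "continuous_map (suspension (top_of_set X_minus_Y)) (top_of_set SX_minus_Y) susp_to_join"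
proof (rule continuous_map_from_suspension)
  show "susp_to_join \<in> topspace (suspension (top_of_set X_minus_Y)) \<rightarrow> topspace (top_of_set SX_minus_Y)"
    by (auto simp: topspace_suspension susp_to_join_def apex_in_SX_minus_Y join_pt_in_SX_minus_Y)
  have "continuous_map (prod_topology (top_of_set X_minus_Y) (top_of_set {0..1})) (top_of_set SX_minus_Y) join_pt"
    using join_pt_in_SX_minus_Y by (auto simp: continuous_map_in_subtopology continuous_on_join_pt)
  then show "continuous_map (prod_topology (top_of_set X_minus_Y) (top_of_set {0..1}))
      (top_of_set SX_minus_Y) (susp_to_join \<circ> susp_pt)"
    by (rule continuous_map_eq) (auto simp: susp_to_join_susp_pt)
qed

lemma susp_to_join_join_to_susp:
  "f \<in> SX_minus_Y \<Longrightarrow> susp_to_join (join_to_susp f) = join_pt (base f, height f)"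
  by (simp add: join_to_susp_def susp_to_join_susp_pt height_bounds)

lemma supp_susp_to_join_join_to_susp:
  assumes f: "f \<in> SX_minus_Y"
  shows "supp (susp_to_join (join_to_susp f)) \<subseteq> supp f"
proof
  fix x assume "x \<in> supp (susp_to_join (join_to_susp f))"
  then have x: "join_pt (base f, height f) x \<noteq> 0"
    by (simp add: susp_to_join_join_to_susp[OF f] supp_def)
  have "f x \<noteq> 0"
  proof (cases x)
    case (Inl v)
    with x show ?thesis
      by (simp add: join_pt_def base_def)
  next
    case (Inr b)
    show ?thesis
    proof (cases b)
      case True
      with x Inr have "1/2 < height f"
        by (simp add: join_pt_def)
      then show ?thesis
        using Inr True height_gt_half_iff[OF f] SX_minus_Y_nonneg[OF f, of "Inr False"] by simp
    next
      case False
      with x Inr have "height f < 1/2"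
        by (simp add: join_pt_def)
      then show ?thesis
        using Inr False height_lt_half_iff[OF f] SX_minus_Y_nonneg[OF f, of "Inr True"] by simp
    qed
  qed
  then show "x \<in> supp f"
    by (simp add: supp_def)
qed

lemma homotopic_susp_to_join_join_to_susp:
  "homotopic_with (\<lambda>_. True) (top_of_set SX_minus_Y) (top_of_set SX_minus_Y) (susp_to_join \<circ> join_to_susp) id"
proof (rule homotopic_with_id_straight_line)
  show continuous: "continuous_map (top_of_set SX_minus_Y) (top_of_set SX_minus_Y) (susp_to_join \<circ> join_to_susp)"
    using continuous_map_join_to_susp continuous_map_susp_to_join by (rule continuous_map_compose)
  fix f and l :: real
  assume f: "f \<in> SX_minus_Y" and l: "l \<in> {0..1}"
  have image: "susp_to_join (join_to_susp f) \<in> SX_minus_Y"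
    using continuous_map_image_subset_topspace[OF continuous] f by auto
  show "(\<lambda>x. l * f x + (1 - l) * (susp_to_join \<circ> join_to_susp) f x) \<in> SX_minus_Y"
  proof (cases "l = 0")
    case True
    with image show ?thesis
      by simp
  next
    case False
    with l have "0 < l" "l \<le> 1"
      by auto
    have "f \<in> geom (susp_cx X)" "supp f \<notin> cx_image Inl Y"
      and "susp_to_join (join_to_susp f) \<in> geom (susp_cx X)"
      using f image unfolding SX_minus_Y_def geom_Diff_iff by auto
    with geom_convex_combination[OF _ _ supp_susp_to_join_join_to_susp[OF f] \<open>0 < l\<close> \<open>l \<le> 1\<close>]
    show ?thesis
      unfolding SX_minus_Y_def geom_Diff_iff by simp
  qed
qed

lemma height_apex: "height (apex True) = 1" "height (apex False) = 0"
  by (simp_all add: height_def apex_def o_def face_sum_zero)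

lemma join_to_susp_apex: "join_to_susp (apex b) = Inl b"
  by (cases b) (simp_all add: join_to_susp_def susp_pt_def height_apex)

lemma join_to_susp_join_pt:
  "0 < s \<Longrightarrow> s < 1 \<Longrightarrow> join_to_susp (join_pt (g, s)) = susp_pt (g, height (join_pt (g, s)))"
  by (simp add: join_to_susp_def base_join_pt)

lemma homotopic_join_to_susp_susp_to_join:
  "homotopic_with (\<lambda>_. True) (suspension (top_of_set X_minus_Y)) (suspension (top_of_set X_minus_Y))
     (join_to_susp \<circ> susp_to_join) id"
proof -
  have "homotopic_with (\<lambda>_. True) (suspension (top_of_set X_minus_Y)) (suspension (top_of_set X_minus_Y))
      (\<lambda>x. case x of Inl b \<Rightarrow> Inl b | Inr p \<Rightarrow> susp_pt (fst p, height (join_pt p))) id"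
  proof (rule homotopic_suspension_reparametrisation)
    have "continuous_on (X_minus_Y \<times> {0..1}) (height \<circ> join_pt)"
      using continuous_on_join_pt join_pt_in_SX_minus_Y
      by (intro continuous_on_compose continuous_on_subset[OF continuous_on_height]) auto
    then show "continuous_map (prod_topology (top_of_set X_minus_Y) (top_of_set {0..1})) euclideanreal
        (\<lambda>p. height (join_pt p))"
      by (simp add: o_def)
  qed (use join_pt_in_SX_minus_Y height_bounds in \<open>auto simp: join_pt_apex height_apex\<close>)
  then show ?thesis
    by (rule homotopic_with_eq)
      (auto simp: topspace_suspension susp_to_join_def join_to_susp_apex join_to_susp_join_pt)
qed

end

theorem lemma4p5:
  fixes X Y :: "'a set set"
  assumes "finite_simplicial_complex X"
    and "subcomplex Y X"
  shows "suspension (top_of_set (geom X - geom Y))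
           homotopy_equivalent_space
         top_of_set (geom (susp_cx X) - geom (cx_image Inl Y))"
proof -
  interpret simplicial_pair X Y
    using assms by (rule simplicial_pair.intro)
  show ?thesis
    unfolding homotopy_equivalent_space_def X_minus_Y_def[symmetric] SX_minus_Y_def[symmetric]
    using continuous_map_susp_to_join continuous_map_join_to_susp
      homotopic_join_to_susp_susp_to_join homotopic_susp_to_join_join_to_susp
    by blast
qed

end
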